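(* Let $\mathcal{I}$ be an instance of the Square Strip Packing Problem, consider the bottom-left packing for an ordering attaining $h_{\text{BL}}^{\text{worst}}(\mathcal{I})$, let $h_{\text{BL}}$ be its height, and let $g\ge 0$ be a constant and $f$ the number such that the unoccupied space of this packing within the substrip $[0,W]\times[0,h_{\text{BL}}-g\,h_{\text{max}}]$ can be covered by $f$ copies of the squares of the instance (a union of translates in which each square of $\mathcal{I}$ is used at most $f$ times). Then $$\frac{h_{\text{BL}}^{\text{worst}}(\mathcal{I})}{h_{\text{OPT}}(\mathcal{I})}\ \le\ f+g+1 .$$
   Context: Square Strip Packing Problem: squares with side lengths at most $W$ are to be packed without rotation into the strip $[0,W]\times[0,\infty)$ with pairwise disjoint interiors; the height of a packing is the maximum top coordinate of a square, and $h_{\text{OPT}}(\mathcal{I})$ is the minimum height of a feasible packing. Bottom-left algorithm: given an ordering, place the first square at $(0,0)$ and each subsequent square at a feasible position $(x,y)$ (lower-left corner) with $(y,x)$ lexicographically minimal. $h_{\text{BL}}^{\text{worst}}(\mathcal{I})$ is the maximum over all orderings of the height of the bottom-left packing. $h_{\text{max}}$ is the largest side length of a square in $\mathcal{I}$. *)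

theory Defs
  imports Complex_Main
begin

definition closed_sq :: "real \<times> real \<Rightarrow> real \<Rightarrow> (real \<times> real) set" where
  "closed_sq p a = {fst p .. fst p + a} \<times> {snd p .. snd p + a}"

definition open_sq :: "real \<times> real \<Rightarrow> real \<Rightarrow> (real \<times> real) set" where
  "open_sq p a = {fst p <..< fst p + a} \<times> {snd p <..< snd p + a}"

definition valid_instance :: "real \<Rightarrow> nat \<Rightarrow> (nat \<Rightarrow> real) \<Rightarrow> bool" where
  "valid_instance W n s \<longleftrightarrow> 0 < W \<and> (\<forall>i<n. 0 < s i \<and> s i \<le> W)"

definition h_max :: "nat \<Rightarrow> (nat \<Rightarrow> real) \<Rightarrow> real" where
  "h_max n s = Max (s ` {..<n})"

definition in_strip :: "real \<Rightarrow> real \<times> real \<Rightarrow> real \<Rightarrow> bool" where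
  "in_strip W p a \<longleftrightarrow> 0 \<le> fst p \<and> fst p + a \<le> W \<and> 0 \<le> snd p"

definition feasible_packing :: "real \<Rightarrow> nat \<Rightarrow> (nat \<Rightarrow> real) \<Rightarrow> (nat \<Rightarrow> real \<times> real) \<Rightarrow> bool" where
  "feasible_packing W n s pos \<longleftrightarrow>
     (\<forall>i<n. in_strip W (pos i) (s i)) \<and>
     (\<forall>i<n. \<forall>j<n. i \<noteq> j \<longrightarrow> open_sq (pos i) (s i) \<inter> open_sq (pos j) (s j) = {})"

definition packing_height :: "nat \<Rightarrow> (nat \<Rightarrow> real) \<Rightarrow> (nat \<Rightarrow> real \<times> real) \<Rightarrow> real" where
  "packing_height n s pos = (if n = 0 then 0 else Max ((\<lambda>i. snd (pos i) + s i) ` {..<n}))"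

definition h_OPT :: "real \<Rightarrow> nat \<Rightarrow> (nat \<Rightarrow> real) \<Rightarrow> real" where
  "h_OPT W n s = Inf {packing_height n s pos | pos. feasible_packing W n s pos}"

definition feasible_pos :: "real \<Rightarrow> ((real \<times> real) \<times> real) set \<Rightarrow> real \<Rightarrow> real \<times> real \<Rightarrow> bool" where
  "feasible_pos W P a q \<longleftrightarrow> in_strip W q a \<and> (\<forall>(p, b) \<in> P. open_sq q a \<inter> open_sq p b = {})"

definition yx_lex_le :: "real \<times> real \<Rightarrow> real \<times> real \<Rightarrow> bool" where
  "yx_lex_le q r \<longleftrightarrow> snd q < snd r \<or> (snd q = snd r \<and> fst q \<le> fst r)"

text \<open>An ordering is a permutation \<sigma> of {..<n}: \<sigma> k is the k-th square placed.
  pos is the bottom-left packing for \<sigma> if each square \<sigma> k is placed at the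
  (y,x)-lexicographically minimal feasible position given the squares \<sigma> 0 .. \<sigma> (k-1).\<close>
definition is_ordering :: "nat \<Rightarrow> (nat \<Rightarrow> nat) \<Rightarrow> bool" where
  "is_ordering n \<sigma> \<longleftrightarrow> bij_betw \<sigma> {..<n} {..<n}"

definition is_BL_packing :: "real \<Rightarrow> nat \<Rightarrow> (nat \<Rightarrow> real) \<Rightarrow> (nat \<Rightarrow> nat) \<Rightarrow> (nat \<Rightarrow> real \<times> real) \<Rightarrow> bool" where
  "is_BL_packing W n s \<sigma> pos \<longleftrightarrow>
     (\<forall>k<n. let P = {(pos (\<sigma> j), s (\<sigma> j)) | j. j < k} in
        feasible_pos W P (s (\<sigma> k)) (pos (\<sigma> k)) \<and>
        (\<forall>q. feasible_pos W P (s (\<sigma> k)) q \<longrightarrow> yx_lex_le (pos (\<sigma> k)) q))"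

definition h_BL_worst :: "real \<Rightarrow> nat \<Rightarrow> (nat \<Rightarrow> real) \<Rightarrow> real" where
  "h_BL_worst W n s = Sup {packing_height n s pos | \<sigma> pos. is_ordering n \<sigma> \<and> is_BL_packing W n s \<sigma> pos}"

definition unoccupied :: "real \<Rightarrow> real \<Rightarrow> nat \<Rightarrow> (nat \<Rightarrow> real) \<Rightarrow> (nat \<Rightarrow> real \<times> real) \<Rightarrow> (real \<times> real) set" where
  "unoccupied W H n s pos = ({0..W} \<times> {0..H}) - (\<Union>i<n. closed_sq (pos i) (s i))"

definition covered_by_copies :: "nat \<Rightarrow> nat \<Rightarrow> (nat \<Rightarrow> real) \<Rightarrow> (real \<times> real) set \<Rightarrow> bool" where
  "covered_by_copies f n s U \<longleftrightarrow>
     (\<exists>T :: nat \<Rightarrow> (real \<times> real) set.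
        (\<forall>i<n. finite (T i) \<and> card (T i) \<le> f) \<and>
        U \<subseteq> (\<Union>i<n. \<Union>t\<in>T i. closed_sq t (s i)))"

end

theory Submission
  imports Defs "HOL-Analysis.Analysis"
begin

text \<open>Let \<open>A\<close> be the total area of the squares and \<open>Y = h\<^sub>B\<^sub>L - g h\<^sub>m\<^sub>a\<^sub>x\<close>. The rectangle
  \<open>[0,W] \<times> [0,Y]\<close> is covered by the packed squares together with the \<open>f\<close> copies, so
  \<open>W Y \<le> (f + 1) A\<close>. Every packing, in particular an optimal one, has area at least \<open>A\<close> and
  height at least \<open>h\<^sub>m\<^sub>a\<^sub>x\<close>, so \<open>A \<le> W h\<^sub>O\<^sub>P\<^sub>T\<close> and \<open>h\<^sub>m\<^sub>a\<^sub>x \<le> h\<^sub>O\<^sub>P\<^sub>T\<close>. Combining,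
  \<open>h\<^sub>B\<^sub>L \<le> (f + 1) h\<^sub>O\<^sub>P\<^sub>T + g h\<^sub>O\<^sub>P\<^sub>T\<close>.\<close>

lemma closed_sq_eq_cbox: "closed_sq p a = cbox p (fst p + a, snd p + a)"
  by (cases p) (simp add: closed_sq_def cbox_Pair_eq)

lemma open_sq_eq_box: "open_sq p a = box p (fst p + a, snd p + a)"
  by (cases p) (auto simp: open_sq_def box_def Basis_prod_def)

lemma closed_sq_fmeasurable [simp]: "closed_sq p a \<in> fmeasurable lborel"
  by (simp add: closed_sq_eq_cbox)

lemma open_sq_fmeasurable [simp]: "open_sq p a \<in> fmeasurable lborel"
  by (simp add: open_sq_eq_box)

lemma closed_sq_borel [simp]: "closed_sq p a \<in> sets borel"
  by (simp add: closed_sq_eq_cbox)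

lemma open_sq_borel [simp]: "open_sq p a \<in> sets borel"
  by (simp add: open_sq_eq_box)

lemma emeasure_open_sq_finite [simp]: "emeasure lborel (open_sq p a) \<noteq> top"
  using open_sq_fmeasurable[of p a] by (simp add: fmeasurable_def)

lemma measure_closed_sq: "0 \<le> a \<Longrightarrow> measure lborel (closed_sq p a) = a\<^sup>2"
  by (cases p) (simp add: closed_sq_eq_cbox measure_lborel_cbox_eq Basis_prod_def power2_eq_square)

lemma measure_open_sq: "0 \<le> a \<Longrightarrow> measure lborel (open_sq p a) = a\<^sup>2"
  by (cases p) (simp add: open_sq_eq_box measure_lborel_box_eq Basis_prod_def power2_eq_square)

lemma measure_rectangle:
  "0 \<le> w \<Longrightarrow> 0 \<le> h \<Longrightarrow> measure lborel (cbox (0, 0) (w, h) :: (real \<times> real) set) = w * h"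
  by (simp add: measure_lborel_cbox_eq Basis_prod_def)

lemma measure_UN_closed_sq_le:
  assumes "finite I" and "\<And>i. i \<in> I \<Longrightarrow> 0 \<le> a i"
  shows "measure lborel (\<Union>i\<in>I. closed_sq (p i) (a i)) \<le> (\<Sum>i\<in>I. (a i)\<^sup>2)"
proof -
  have "measure lborel (\<Union>i\<in>I. closed_sq (p i) (a i)) \<le> (\<Sum>i\<in>I. measure lborel (closed_sq (p i) (a i)))"
    using assms(1) by (intro measure_UNION_le) auto
  also have "\<dots> = (\<Sum>i\<in>I. (a i)\<^sup>2)"
    using assms(2) by (intro sum.cong) (auto simp: measure_closed_sq)
  finally show ?thesis .
qed

lemma h_max_attained:
  assumes "0 < n" obtains i where "i < n" and "h_max n s = s i"
proof -
  have "h_max n s \<in> s ` {..<n}"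
    unfolding h_max_def using assms by (intro Max_in) auto
  with that show ?thesis by auto
qed

lemma packing_height_ge: "i < n \<Longrightarrow> snd (pos i) + s i \<le> packing_height n s pos"
  unfolding packing_height_def by (auto intro: Max_ge)

lemma packing_height_nonneg:
  assumes "feasible_packing W n s pos" and "\<And>i. i < n \<Longrightarrow> 0 \<le> s i"
  shows "0 \<le> packing_height n s pos"
proof (cases "n = 0")
  case False
  then have "snd (pos 0) + s 0 \<le> packing_height n s pos" by (intro packing_height_ge) simp
  moreover have "0 \<le> snd (pos 0)"
    using assms(1) False by (simp add: feasible_packing_def in_strip_def)
  ultimately show ?thesis using assms(2) False by fastforce
qed (simp add: packing_height_def)

lemma h_max_le_packing_height:
  assumes "feasible_packing W n s pos" and "0 < n"
  shows "h_max n s \<le> packing_height n s pos"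
proof -
  obtain i where i: "i < n" "h_max n s = s i"
    using h_max_attained[OF \<open>0 < n\<close>] .
  have "0 \<le> snd (pos i)" using assms(1) i(1) by (simp add: feasible_packing_def in_strip_def)
  with i packing_height_ge[of i n pos s] show ?thesis by simp
qed

lemma area_le_width_mult_packing_height:
  assumes "feasible_packing W n s pos" and "\<And>i. i < n \<Longrightarrow> 0 \<le> s i"
  shows "(\<Sum>i<n. (s i)\<^sup>2) \<le> W * packing_height n s pos"
proof (cases "n = 0")
  case False
  let ?H = "packing_height n s pos" and ?U = "\<Union>i<n. open_sq (pos i) (s i)"
  have strip: "\<And>i. i < n \<Longrightarrow> in_strip W (pos i) (s i)"
    using assms(1) by (simp add: feasible_packing_def)
  have "0 \<le> W" using strip[of 0] assms(2)[of 0] False by (auto simp: in_strip_def)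
  have disjoint: "disjoint_family_on (\<lambda>i. open_sq (pos i) (s i)) {..<n}"
    using assms(1) by (auto simp: feasible_packing_def disjoint_family_on_def)
  have U_sub: "?U \<subseteq> cbox (0, 0) (W, ?H)"
  proof
    fix z assume "z \<in> ?U"
    then obtain i where "i < n" "z \<in> open_sq (pos i) (s i)" by auto
    with strip[of i] packing_height_ge[of i n pos s] show "z \<in> cbox (0, 0) (W, ?H)"
      by (cases z) (auto simp: open_sq_def in_strip_def cbox_Pair_eq)
  qed
  have "(\<Sum>i<n. (s i)\<^sup>2) = (\<Sum>i<n. measure lborel (open_sq (pos i) (s i)))"
    using assms(2) by (intro sum.cong) (auto simp: measure_open_sq)
  also have "\<dots> = measure lborel ?U"
    using disjoint by (intro measure_finite_Union[symmetric]) (auto simp: fmeasurable_def)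
  also have "\<dots> \<le> measure lborel (cbox (0, 0) (W, ?H) :: (real \<times> real) set)"
    using U_sub by (intro measure_mono_fmeasurable) auto
  also have "\<dots> = W * ?H"
    using \<open>0 \<le> W\<close> packing_height_nonneg[OF assms] by (rule measure_rectangle)
  finally show ?thesis .
qed (simp add: packing_height_def)

lemma BL_packing_feasible:
  assumes "is_ordering n \<sigma>" and "is_BL_packing W n s \<sigma> pos"
  shows "feasible_packing W n s pos"
proof -
  have \<sigma>_onto: "\<And>i. i < n \<Longrightarrow> \<exists>k<n. \<sigma> k = i"
    using assms(1) unfolding is_ordering_def bij_betw_def by (metis imageE lessThan_iff)
  have feasible: "\<And>k. k < n \<Longrightarrow>
      feasible_pos W {(pos (\<sigma> j), s (\<sigma> j)) | j. j < k} (s (\<sigma> k)) (pos (\<sigma> k))"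
    using assms(2) unfolding is_BL_packing_def Let_def by blast
  have disjoint_earlier: "open_sq (pos (\<sigma> k)) (s (\<sigma> k)) \<inter> open_sq (pos (\<sigma> l)) (s (\<sigma> l)) = {}"
    if "l < k" "k < n" for k l
    using feasible[OF that(2)] that(1) unfolding feasible_pos_def by blast
  show ?thesis unfolding feasible_packing_def
  proof (intro conjI allI impI)
    fix i assume "i < n"
    with \<sigma>_onto obtain k where "k < n" "\<sigma> k = i" by blast
    with feasible[of k] show "in_strip W (pos i) (s i)" by (simp add: feasible_pos_def)
  next
    fix i j assume "i < n" "j < n" "i \<noteq> j"
    with \<sigma>_onto obtain k l where kl: "k < n" "\<sigma> k = i" "l < n" "\<sigma> l = j" by metis
    with \<open>i \<noteq> j\<close> consider "l < k" | "k < l" by fastforce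
    then show "open_sq (pos i) (s i) \<inter> open_sq (pos j) (s j) = {}"
      by cases (use disjoint_earlier kl in \<open>auto simp: Int_commute\<close>)
  qed
qed

lemma le_h_OPT:
  assumes "feasible_packing W n s pos"
    and "\<And>pos'. feasible_packing W n s pos' \<Longrightarrow> L \<le> packing_height n s pos'"
  shows "L \<le> h_OPT W n s"
  unfolding h_OPT_def using assms by (intro cInf_greatest) auto

lemma h_max_le_h_OPT:
  "feasible_packing W n s pos \<Longrightarrow> 0 < n \<Longrightarrow> h_max n s \<le> h_OPT W n s"
  by (rule le_h_OPT) (auto intro: h_max_le_packing_height)

lemma area_le_h_OPT:
  assumes "valid_instance W n s" and "feasible_packing W n s pos"
  shows "(\<Sum>i<n. (s i)\<^sup>2) \<le> W * h_OPT W n s"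
proof -
  have W: "0 < W" and s: "\<And>i. i < n \<Longrightarrow> 0 \<le> s i"
    using assms(1) by (auto simp: valid_instance_def)
  have "(\<Sum>i<n. (s i)\<^sup>2) / W \<le> h_OPT W n s"
    using assms(2) area_le_width_mult_packing_height[OF _ s] W
    by (intro le_h_OPT) (auto simp: pos_divide_le_eq mult.commute)
  with W show ?thesis by (simp add: pos_divide_le_eq mult.commute)
qed

lemma rectangle_area_le_if_unoccupied_covered:
  assumes "0 \<le> W" and "0 \<le> Y" and "\<And>i. i < n \<Longrightarrow> 0 \<le> s i"
    and "covered_by_copies f n s (unoccupied W Y n s pos)"
  shows "W * Y \<le> (real f + 1) * (\<Sum>i<n. (s i)\<^sup>2)"
proof -
  obtain T where T: "\<And>i. i < n \<Longrightarrow> finite (T i) \<and> card (T i) \<le> f"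
    and cover: "unoccupied W Y n s pos \<subseteq> (\<Union>i<n. \<Union>t\<in>T i. closed_sq t (s i))"
    using assms(4) unfolding covered_by_copies_def by blast
  define A where "A = (\<Union>i<n. closed_sq (pos i) (s i))"
  define B where "B = (\<Union>c\<in>Sigma {..<n} T. closed_sq (snd c) (s (fst c)))"
  have fin: "finite (Sigma {..<n} T)" using T by (intro finite_SigmaI) auto
  have A_meas: "A \<in> fmeasurable lborel" unfolding A_def by (intro fmeasurable.finite_UN) auto
  have B_meas: "B \<in> fmeasurable lborel" unfolding B_def using fin by (intro fmeasurable.finite_UN) auto
  have "(\<Union>i<n. \<Union>t\<in>T i. closed_sq t (s i)) = B"
    unfolding B_def by force
  with cover have "cbox (0, 0) (W, Y) \<subseteq> A \<union> B"
    unfolding A_def unoccupied_def by (auto simp: cbox_Pair_eq)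
  then have "measure lborel (cbox (0, 0) (W, Y) :: (real \<times> real) set) \<le> measure lborel (A \<union> B)"
    using A_meas B_meas by (intro measure_mono_fmeasurable) auto
  then have "W * Y \<le> measure lborel (A \<union> B)"
    using measure_rectangle[OF assms(1,2)] by simp
  also have "\<dots> \<le> measure lborel A + measure lborel B"
    using A_meas B_meas by (intro measure_Un_le) auto
  also have "measure lborel A \<le> (\<Sum>i<n. (s i)\<^sup>2)"
    unfolding A_def using assms(3) by (intro measure_UN_closed_sq_le) auto
  also have "measure lborel B \<le> (\<Sum>c\<in>Sigma {..<n} T. (s (fst c))\<^sup>2)"
    unfolding B_def using fin assms(3) by (intro measure_UN_closed_sq_le) auto
  also have "\<dots> = (\<Sum>i<n. \<Sum>t\<in>T i. (s i)\<^sup>2)"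
    by (subst sum.Sigma) (use T in \<open>auto simp: case_prod_beta\<close>)
  also have "\<dots> = (\<Sum>i<n. real (card (T i)) * (s i)\<^sup>2)"
    by simp
  also have "\<dots> \<le> (\<Sum>i<n. real f * (s i)\<^sup>2)"
    using T by (intro sum_mono mult_right_mono) auto
  finally show ?thesis by (simp add: sum_distrib_left algebra_simps sum.distrib)
qed

lemma packing_height_le_if_covered:
  assumes "valid_instance W n s" and "0 < n" and "feasible_packing W n s pos" and "0 \<le> g"
    and "covered_by_copies f n s (unoccupied W (packing_height n s pos - g * h_max n s) n s pos)"
  shows "packing_height n s pos \<le> (real f + g + 1) * h_OPT W n s"
proof -
  define H Hopt h A where "H = packing_height n s pos" and "Hopt = h_OPT W n s"
    and "h = h_max n s" and "A = (\<Sum>i<n. (s i)\<^sup>2)"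
  have W: "0 < W" and s: "\<And>i. i < n \<Longrightarrow> 0 \<le> s i"
    using assms(1) by (auto simp: valid_instance_def)
  have h_le_Hopt: "h \<le> Hopt" unfolding h_def Hopt_def by (rule h_max_le_h_OPT[OF assms(3,2)])
  have "0 \<le> h"
    unfolding h_def using h_max_attained[OF assms(2)] s by metis
  have gh: "g * h \<le> g * Hopt" using h_le_Hopt assms(4) by (rule mult_left_mono)
  have "H - g * h \<le> (real f + 1) * Hopt"
  proof (cases "0 \<le> H - g * h")
    case True
    have "W * (H - g * h) \<le> (real f + 1) * A"
      using rectangle_area_le_if_unoccupied_covered
        [OF less_imp_le[OF W] True[unfolded H_def h_def] s assms(5)]
      unfolding H_def h_def A_def .
    also have "\<dots> \<le> (real f + 1) * (W * Hopt)"
      unfolding A_def Hopt_def using area_le_h_OPT[OF assms(1,3)] by (intro mult_left_mono) auto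
    finally have "W * (H - g * h) \<le> W * ((real f + 1) * Hopt)"
      by (simp add: algebra_simps)
    with W show ?thesis by simp
  next
    case False
    moreover have "0 \<le> (real f + 1) * Hopt" using \<open>0 \<le> h\<close> h_le_Hopt by simp
    ultimately show ?thesis by linarith
  qed
  with gh show ?thesis unfolding H_def Hopt_def by (simp add: algebra_simps)
qed

theorem theorem14:
  fixes W :: real and n :: nat and s :: "nat \<Rightarrow> real"
    and \<sigma> :: "nat \<Rightarrow> nat" and pos :: "nat \<Rightarrow> real \<times> real"
    and g :: real and f :: nat
  assumes "valid_instance W n s"
    and "0 < n"
    and "is_ordering n \<sigma>"
    and "is_BL_packing W n s \<sigma> pos"
    and "packing_height n s pos = h_BL_worst W n s"
    and "0 \<le> g"
    and "covered_by_copies f n s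
           (unoccupied W (packing_height n s pos - g * h_max n s) n s pos)"
  shows "h_BL_worst W n s / h_OPT W n s \<le> real f + g + 1"
proof -
  have feasible: "feasible_packing W n s pos"
    using assms(3,4) by (rule BL_packing_feasible)
  have "0 < h_max n s"
    using h_max_attained[OF assms(2)] assms(1) by (metis valid_instance_def)
  also have "h_max n s \<le> h_OPT W n s"
    using feasible assms(2) by (rule h_max_le_h_OPT)
  finally have "0 < h_OPT W n s" .
  moreover have "h_BL_worst W n s \<le> (real f + g + 1) * h_OPT W n s"
    using packing_height_le_if_covered[OF assms(1,2) feasible assms(6,7)] assms(5) by simp
  ultimately show ?thesis by (simp add: pos_divide_le_eq)
qed

end
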